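(* Let $U\in\mathcal{U}_N$ and $S\subseteq[n]$. Prepare the Choi–Jamiołkowski state $|v(U)\rangle$ (using one query to $U$), measure the $2|S|$ qubits in the registers $S\cup\{\tilde\ell:\ell\in S\}$ in the Bell basis $\{|v(\sigma_y)\rangle\}_{y\in\mathbb{Z}_4^{S}}$, and let $X=0$ if the outcome is $|v(I^{\otimes|S|})\rangle=|\mathrm{EPR}\rangle^{\otimes|S|}$ and $X=1$ otherwise. Then $\mathbb{E}[X]=\mathrm{Inf}_S[U]$.
   Context: $N=2^n$, $\mathcal{U}_N$ is the set of $N\times N$ unitaries. Pauli matrices: $\sigma_0=I$, $\sigma_1=X$, $\sigma_2=Y$, $\sigma_3=Z$; for $x\in\mathbb{Z}_4^n$, $\sigma_x=\sigma_{x_1}\otimes\cdots\otimes\sigma_{x_n}$ and $\mathrm{supp}(x)=\{i:x_i\ne0\}$. Every $U\in\mathbb{C}^{N\times N}$ can be uniquely written $U=\sum_{x\in\mathbb{Z}_4^n}\widehat{U}(x)\sigma_x$ (Pauli coefficients). The influence of $S\subseteq[n]$ on $U$ is $\mathrm{Inf}_S[U]=\sum_{x:\,\mathrm{supp}(x)\cap S\ne\emptyset}|\widehat{U}(x)|^2$. The Choi–Jamiołkowski state of an $N\times N$ matrix $A$ is $|v(A)\rangle=(A\otimes I)\frac{1}{\sqrt N}\sum_{i}|i\rangle|i\rangle$ on $2n$ qubits; qubit $\ell\in[n]$ (acted on by $A$) is paired with qubit $\tilde\ell\in\{n+1,\dots,2n\}$ with which it formed an EPR pair $|\mathrm{EPR}\rangle=(|00\rangle+|11\rangle)/\sqrt2$.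 For $y\in\mathbb{Z}_4^S$, $|v(\sigma_y)\rangle$ is the corresponding state on the $2|S|$ qubits $S\cup\{\tilde\ell:\ell\in S\}$. *)

theory Defs
  imports Complex_Main
begin

text \<open>Qubits are indexed 0,...,n-1 (the paper's qubit l corresponds to index l-1). An N x N matrix (N = 2^n) is a function taking a row basis string and
  a column basis string (both in bits_on {..<n}) to a complex number.\<close>

type_synonym bstr = "nat \<Rightarrow> bool"
type_synonym qmat = "bstr \<Rightarrow> bstr \<Rightarrow> complex"

definition bits_on :: "nat set \<Rightarrow> bstr set" where
  "bits_on T = {f. \<forall>i. i \<notin> T \<longrightarrow> \<not> f i}"

text \<open>Pauli labels on T: elements of Z_4^T, i.e. functions with values in {0,1,2,3} on T
  and 0 outside T.\<close>
definition paulis_on :: "nat set \<Rightarrow> (nat \<Rightarrow> nat) set" where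
  "paulis_on T = {x. (\<forall>i\<in>T. x i < 4) \<and> (\<forall>i. i \<notin> T \<longrightarrow> x i = 0)}"

text \<open>Single-qubit Pauli matrices sigma_0 = I, sigma_1 = X, sigma_2 = Y, sigma_3 = Z;
  the basis state |0> is False, |1> is True; arguments are (label, row, column).\<close>
definition pauli1 :: "nat \<Rightarrow> bool \<Rightarrow> bool \<Rightarrow> complex" where
  "pauli1 k a b =
     (if k = 0 then (if a = b then 1 else 0)
      else if k = 1 then (if a \<noteq> b then 1 else 0)
      else if k = 2 then (if a = b then 0 else if a then \<i> else - \<i>)
      else (if a = b then (if a then -1 else 1) else 0))"

definition pauli_on :: "nat set \<Rightarrow> (nat \<Rightarrow> nat) \<Rightarrow> qmat" where
  "pauli_on T x a b = (\<Prod>i\<in>T. pauli1 (x i) (a i) (b i))"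

definition unitary :: "nat \<Rightarrow> qmat \<Rightarrow> bool" where
  "unitary n U \<longleftrightarrow> (\<forall>a\<in>bits_on {..<n}. \<forall>b\<in>bits_on {..<n}.
      (\<Sum>c\<in>bits_on {..<n}. U a c * cnj (U b c)) = (if a = b then 1 else 0))"

definition pauli_coeff :: "nat \<Rightarrow> qmat \<Rightarrow> (nat \<Rightarrow> nat) \<Rightarrow> complex" where
  "pauli_coeff n U = (THE c. (\<forall>x. x \<notin> paulis_on {..<n} \<longrightarrow> c x = 0) \<and>
      (\<forall>a\<in>bits_on {..<n}. \<forall>b\<in>bits_on {..<n}.
          U a b = (\<Sum>x\<in>paulis_on {..<n}. c x * pauli_on {..<n} x a b)))"

definition influence :: "nat \<Rightarrow> nat set \<Rightarrow> qmat \<Rightarrow> real" where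
  "influence n S U = (\<Sum>x\<in>{x\<in>paulis_on {..<n}. \<exists>i\<in>S. x i \<noteq> 0}.
      (cmod (pauli_coeff n U x))\<^sup>2)"

text \<open>A state on 2n qubits: amplitude psi a b, where a is the basis string of the qubits
  1..n and b that of the paired qubits ~1..~n (qubit l of b is ~l).\<close>
definition choi :: "nat \<Rightarrow> qmat \<Rightarrow> qmat" where
  "choi n A a b = A a b / complex_of_real (sqrt (2 ^ n))"

definition bell_vec :: "nat set \<Rightarrow> (nat \<Rightarrow> nat) \<Rightarrow> qmat" where
  "bell_vec S y = choi (card S) (pauli_on S y)"

definition merge :: "nat set \<Rightarrow> bstr \<Rightarrow> bstr \<Rightarrow> bstr" where
  "merge S f g = (\<lambda>i. if i \<in> S then f i else g i)"

text \<open>Born-rule probability of outcome |v(sigma_y)> when measuring the registers S and ~S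
  of the 2n-qubit state psi in the Bell basis: squared norm of (<v(sigma_y)| (x) I) psi.\<close>
definition bell_prob :: "nat \<Rightarrow> nat set \<Rightarrow> qmat \<Rightarrow> (nat \<Rightarrow> nat) \<Rightarrow> real" where
  "bell_prob n S psi y =
     (\<Sum>a'\<in>bits_on ({..<n} - S). \<Sum>b'\<in>bits_on ({..<n} - S).
        (cmod (\<Sum>aS\<in>bits_on S. \<Sum>bS\<in>bits_on S.
           cnj (bell_vec S y aS bS) * psi (merge S aS a') (merge S bS b')))\<^sup>2)"

text \<open>E[X], where X = 0 on outcome |EPR>^{(x)|S|} (label y = 0) and X = 1 otherwise.\<close>
definition expected_X :: "nat \<Rightarrow> nat set \<Rightarrow> qmat \<Rightarrow> real" where
  "expected_X n S U = (\<Sum>y\<in>paulis_on S - {(\<lambda>_. 0)}. bell_prob n S (choi n U) y)"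

end

theory Submission
  imports Defs "HOL-Library.FuncSet"
begin

(* Expand U = sum_x Uhat(x) sigma_x. Since the Pauli matrices are orthogonal for the
   Hilbert-Schmidt inner product, projecting the registers S and ~S of the Choi state onto
   the Bell state of sigma_y leaves, up to normalisation, the sum of Uhat(x) sigma_x
   (restricted to the qubits outside S) over the x that agree with y on S. By Parseval on
   those remaining qubits, outcome y has probability sum {|Uhat(x)|^2 : x agrees with y on S},
   and summing over y <> 0 gives the Pauli weight of the strings whose support meets S. *)

definition funcs_on :: "nat set \<Rightarrow> 'v set \<Rightarrow> 'v \<Rightarrow> (nat \<Rightarrow> 'v) set" where
  "funcs_on T V d = {f. (\<forall>i\<in>T. f i \<in> V) \<and> (\<forall>i. i \<notin> T \<longrightarrow> f i = d)}"

lemma bits_on_eq_funcs_on: "bits_on T = funcs_on T UNIV False"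
  unfolding bits_on_def funcs_on_def by auto

lemma paulis_on_eq_funcs_on: "paulis_on T = funcs_on T {..<4} 0"
  unfolding paulis_on_def funcs_on_def by auto

lemma funcs_on_eq_image_PiE:
  "funcs_on T V d = (\<lambda>h i. if i \<in> T then h i else d) ` (T \<rightarrow>\<^sub>E V)"
proof (intro set_eqI iffI)
  fix f assume "f \<in> funcs_on T V d"
  then have "f = (\<lambda>i. if i \<in> T then restrict f T i else d)" and "restrict f T \<in> (T \<rightarrow>\<^sub>E V)"
    unfolding funcs_on_def by auto
  then show "f \<in> (\<lambda>h i. if i \<in> T then h i else d) ` (T \<rightarrow>\<^sub>E V)" by blast
qed (auto simp: funcs_on_def)

lemma inj_on_extend_PiE: "inj_on (\<lambda>h i. if i \<in> T then h i else d) (T \<rightarrow>\<^sub>E V)"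
proof (rule inj_onI)
  fix h h' assume h: "h \<in> (T \<rightarrow>\<^sub>E V)" and h': "h' \<in> (T \<rightarrow>\<^sub>E V)"
    and eq: "(\<lambda>i. if i \<in> T then h i else d) = (\<lambda>i. if i \<in> T then h' i else d)"
  show "h = h'"
  proof (rule PiE_ext[OF h h'])
    fix i assume "i \<in> T" then show "h i = h' i" using fun_cong[OF eq, of i] by simp
  qed
qed

lemma finite_funcs_on: "finite T \<Longrightarrow> finite V \<Longrightarrow> finite (funcs_on T V d)"
  unfolding funcs_on_eq_image_PiE by (intro finite_imageI finite_PiE)

lemma sum_prod_funcs_on:
  fixes g :: "nat \<Rightarrow> 'v \<Rightarrow> 'a::comm_semiring_1"
  assumes "finite T" "finite V"
  shows "(\<Sum>f\<in>funcs_on T V d. \<Prod>i\<in>T. g i (f i)) = (\<Prod>i\<in>T. \<Sum>v\<in>V. g i v)"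
proof -
  have "(\<Sum>f\<in>funcs_on T V d. \<Prod>i\<in>T. g i (f i)) = (\<Sum>h\<in>(T \<rightarrow>\<^sub>E V). \<Prod>i\<in>T. g i (h i))"
    unfolding funcs_on_eq_image_PiE sum.reindex[OF inj_on_extend_PiE]
    by (intro sum.cong refl prod.cong) auto
  also have "\<dots> = (\<Prod>i\<in>T. \<Sum>v\<in>V. g i v)"
    using assms by (simp add: prod_sum_PiE)
  finally show ?thesis .
qed

lemma finite_bits_on: "finite T \<Longrightarrow> finite (bits_on T)"
  unfolding bits_on_eq_funcs_on by (simp add: finite_funcs_on)

lemma finite_paulis_on: "finite T \<Longrightarrow> finite (paulis_on T)"
  unfolding paulis_on_eq_funcs_on by (simp add: finite_funcs_on)

definition hs_inner :: "nat set \<Rightarrow> qmat \<Rightarrow> qmat \<Rightarrow> complex" where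
  "hs_inner T A B = (\<Sum>a\<in>bits_on T. \<Sum>b\<in>bits_on T. cnj (A a b) * B a b)"

lemma hs_inner_sum_right:
  "hs_inner T A (\<lambda>a b. \<Sum>x\<in>X. c x * B x a b) = (\<Sum>x\<in>X. c x * hs_inner T A (B x))"
  unfolding hs_inner_def sum_distrib_left
  by (simp add: mult_ac sum.swap[of _ X])

lemma hs_inner_sum_left:
  "hs_inner T (\<lambda>a b. \<Sum>x\<in>X. c x * B x a b) A = (\<Sum>x\<in>X. cnj (c x) * hs_inner T (B x) A)"
  unfolding hs_inner_def sum_distrib_left cnj_sum sum_distrib_right
  by (simp add: mult_ac sum.swap[of _ X])

lemma hs_inner_self: "hs_inner T A A = of_real (\<Sum>a\<in>bits_on T. \<Sum>b\<in>bits_on T. (cmod (A a b))\<^sup>2)"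
  unfolding hs_inner_def by (simp add: complex_norm_square mult.commute del: of_real_power)

lemma hs_inner_cong:
  assumes "\<And>a b. a \<in> bits_on T \<Longrightarrow> b \<in> bits_on T \<Longrightarrow> A a b = A' a b"
    and "\<And>a b. a \<in> bits_on T \<Longrightarrow> b \<in> bits_on T \<Longrightarrow> B a b = B' a b"
  shows "hs_inner T A B = hs_inner T A' B'"
  unfolding hs_inner_def using assms by (intro sum.cong refl) auto

lemma hs_inner_delta_left:
  assumes "finite T" "a \<in> bits_on T" "b \<in> bits_on T"
  shows "hs_inner T (\<lambda>a' b'. if a' = a \<and> b' = b then c else 0) U = cnj c * U a b"
proof -
  have "(\<Sum>b'\<in>bits_on T. cnj (if a' = a \<and> b' = b then c else 0) * U a' b')
      = (if a' = a then cnj c * U a b else 0)" for a'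
    using assms by (cases "a' = a")
      (simp_all add: finite_bits_on if_distrib[of cnj] if_distrib[of "\<lambda>z. z * _"] cong: if_cong)
  then show ?thesis using assms by (simp add: hs_inner_def finite_bits_on)
qed

lemma pauli1_orthogonal:
  assumes "k < 4" "l < 4"
  shows "(\<Sum>u\<in>UNIV. \<Sum>v\<in>UNIV. cnj (pauli1 l u v) * pauli1 k u v) = (if k = l then 2 else 0)"
proof -
  have "k \<in> {0,1,2,3}" "l \<in> {0,1,2,3}" using assms by auto
  then show ?thesis unfolding UNIV_bool pauli1_def by (auto simp: complex_eq_iff)
qed

lemma pauli1_complete:
  "(\<Sum>k<4. cnj (pauli1 k a b) * pauli1 k a' b') = (if a = a' \<and> b = b' then 2 else 0)"
  unfolding pauli1_def
  by (cases a; cases b; cases a'; cases b') (simp_all add: eval_nat_numeral complex_eq_iff)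

lemma prod_if_const:
  fixes c :: "'a::comm_semiring_1"
  assumes "finite T"
  shows "(\<Prod>i\<in>T. if P i then c else 0) = (if \<forall>i\<in>T. P i then c ^ card T else 0)"
proof (cases "\<forall>i\<in>T. P i")
  case True
  then show ?thesis by simp
next
  case False
  then have "(\<Prod>i\<in>T. if P i then c else 0) = 0"
    using assms by (intro prod_zero) auto
  then show ?thesis using False by auto
qed

lemma pauli_on_orthogonal:
  assumes T: "finite T" and "\<forall>i\<in>T. x i < 4" "\<forall>i\<in>T. y i < 4"
  shows "hs_inner T (pauli_on T y) (pauli_on T x) = (if \<forall>i\<in>T. x i = y i then 2 ^ card T else 0)"
proof -
  have "hs_inner T (pauli_on T y) (pauli_on T x)
      = (\<Sum>a\<in>bits_on T. \<Sum>b\<in>bits_on T. \<Prod>i\<in>T. cnj (pauli1 (y i) (a i) (b i)) * pauli1 (x i) (a i) (b i))"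
    unfolding hs_inner_def pauli_on_def by (simp add: prod.distrib)
  also have "\<dots> = (\<Sum>a\<in>bits_on T. \<Prod>i\<in>T. \<Sum>v\<in>UNIV. cnj (pauli1 (y i) (a i) v) * pauli1 (x i) (a i) v)"
    unfolding bits_on_eq_funcs_on using T by (intro sum.cong refl sum_prod_funcs_on) simp_all
  also have "\<dots> = (\<Prod>i\<in>T. \<Sum>u\<in>UNIV. \<Sum>v\<in>UNIV. cnj (pauli1 (y i) u v) * pauli1 (x i) u v)"
    unfolding bits_on_eq_funcs_on using T by (intro sum_prod_funcs_on) simp_all
  also have "\<dots> = (\<Prod>i\<in>T. if x i = y i then 2 else 0)"
    using assms by (intro prod.cong refl pauli1_orthogonal) auto
  finally show ?thesis using T by (simp add: prod_if_const)
qed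

lemma pauli_on_complete:
  assumes T: "finite T" and "a \<in> bits_on T" "a' \<in> bits_on T" "b \<in> bits_on T" "b' \<in> bits_on T"
  shows "(\<Sum>x\<in>paulis_on T. cnj (pauli_on T x a b) * pauli_on T x a' b')
       = (if a = a' \<and> b = b' then 2 ^ card T else 0)"
proof -
  have "(\<Sum>x\<in>paulis_on T. cnj (pauli_on T x a b) * pauli_on T x a' b')
      = (\<Sum>x\<in>paulis_on T. \<Prod>i\<in>T. cnj (pauli1 (x i) (a i) (b i)) * pauli1 (x i) (a' i) (b' i))"
    unfolding pauli_on_def by (simp add: prod.distrib)
  also have "\<dots> = (\<Prod>i\<in>T. \<Sum>k<4. cnj (pauli1 k (a i) (b i)) * pauli1 k (a' i) (b' i))"
    unfolding paulis_on_eq_funcs_on using T by (intro sum_prod_funcs_on) simp_all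
  also have "\<dots> = (if \<forall>i\<in>T. a i = a' i \<and> b i = b' i then 2 ^ card T else 0)"
    using T by (simp add: pauli1_complete prod_if_const)
  also have "(\<forall>i\<in>T. a i = a' i \<and> b i = b' i) \<longleftrightarrow> a = a' \<and> b = b'"
    using assms unfolding bits_on_def by (auto intro!: ext)
  finally show ?thesis .
qed

lemma paulis_on_eqI:
  assumes "x \<in> paulis_on T" "z \<in> paulis_on T" "\<forall>i\<in>T. x i = z i"
  shows "x = z"
proof
  fix i show "x i = z i" using assms unfolding paulis_on_def by (cases "i \<in> T") auto
qed

lemma paulis_on_less_4: "x \<in> paulis_on T \<Longrightarrow> i \<in> T \<Longrightarrow> x i < 4"
  unfolding paulis_on_def by auto

lemma pauli_parseval:
  assumes R: "finite R" and X: "finite X" and "\<forall>x\<in>X. \<forall>i\<in>R. x i < 4"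
    and inj: "\<forall>x\<in>X. \<forall>x'\<in>X. (\<forall>i\<in>R. x i = x' i) \<longrightarrow> x = x'"
  shows "(\<Sum>a\<in>bits_on R. \<Sum>b\<in>bits_on R. (cmod (\<Sum>x\<in>X. d x * pauli_on R x a b))\<^sup>2)
       = 2 ^ card R * (\<Sum>x\<in>X. (cmod (d x))\<^sup>2)"
proof -
  define M where "M a b = (\<Sum>x\<in>X. d x * pauli_on R x a b)" for a b
  have orth: "hs_inner R (pauli_on R x) (pauli_on R x') = (if x = x' then 2 ^ card R else 0)"
    if "x \<in> X" "x' \<in> X" for x x'
    using pauli_on_orthogonal[OF R, of x' x] inj assms(3) that by auto
  have "hs_inner R M M = (\<Sum>x\<in>X. cnj (d x) * (\<Sum>x'\<in>X. d x' * hs_inner R (pauli_on R x) (pauli_on R x')))"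
    unfolding M_def hs_inner_sum_left hs_inner_sum_right ..
  also have "\<dots> = (\<Sum>x\<in>X. 2 ^ card R * of_real ((cmod (d x))\<^sup>2))"
    using X by (intro sum.cong refl) (simp add: orth if_distrib complex_norm_square mult_ac del: of_real_power cong: if_cong)
  also have "\<dots> = of_real (2 ^ card R * (\<Sum>x\<in>X. (cmod (d x))\<^sup>2))"
    by (simp add: sum_distrib_left)
  finally show ?thesis
    unfolding hs_inner_self M_def of_real_eq_iff .
qed

lemma pauli_expansion_coeff:
  assumes T: "finite T" and z: "z \<in> paulis_on T"
    and U: "\<And>a b. a \<in> bits_on T \<Longrightarrow> b \<in> bits_on T \<Longrightarrow> U a b = (\<Sum>x\<in>paulis_on T. c x * pauli_on T x a b)"
  shows "c z = hs_inner T (pauli_on T z) U / 2 ^ card T"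
proof -
  have orth: "hs_inner T (pauli_on T z) (pauli_on T x) = (if x = z then 2 ^ card T else 0)"
    if "x \<in> paulis_on T" for x
    using pauli_on_orthogonal[OF T, of x z] paulis_on_eqI[OF that z] that z
    by (auto simp: paulis_on_less_4)
  have "hs_inner T (pauli_on T z) U
      = hs_inner T (pauli_on T z) (\<lambda>a b. \<Sum>x\<in>paulis_on T. c x * pauli_on T x a b)"
    using U by (intro hs_inner_cong) auto
  also have "\<dots> = c z * 2 ^ card T"
    using T z by (simp add: hs_inner_sum_right orth finite_paulis_on if_distrib cong: if_cong)
  finally show ?thesis by simp
qed

lemma pauli_expansion_exists:
  assumes T: "finite T" and "a \<in> bits_on T" "b \<in> bits_on T"
  shows "(\<Sum>x\<in>paulis_on T. hs_inner T (pauli_on T x) U / 2 ^ card T * pauli_on T x a b) = U a b"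
proof -
  have "(\<Sum>x\<in>paulis_on T. pauli_on T x a b * hs_inner T (pauli_on T x) U)
      = hs_inner T (\<lambda>a' b'. \<Sum>x\<in>paulis_on T. cnj (pauli_on T x a b) * pauli_on T x a' b') U"
    by (simp add: hs_inner_sum_left)
  also have "\<dots> = hs_inner T (\<lambda>a' b'. if a' = a \<and> b' = b then 2 ^ card T else 0) U"
    using assms by (intro hs_inner_cong) (auto simp: pauli_on_complete)
  also have "\<dots> = 2 ^ card T * U a b"
    using assms by (simp add: hs_inner_delta_left)
  finally show ?thesis
    by (simp add: sum_divide_distrib[symmetric] mult.commute)
qed

lemma pauli_coeff_expansion:
  assumes "a \<in> bits_on {..<n}" "b \<in> bits_on {..<n}"
  shows "U a b = (\<Sum>x\<in>paulis_on {..<n}. pauli_coeff n U x * pauli_on {..<n} x a b)"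
proof -
  let ?P = "paulis_on {..<n}" and ?B = "bits_on {..<n}"
  define c where "c x = (if x \<in> ?P then hs_inner {..<n} (pauli_on {..<n} x) U / 2 ^ n else 0)" for x
  have expansion: "U a b = (\<Sum>x\<in>?P. c x * pauli_on {..<n} x a b)" if "a \<in> ?B" "b \<in> ?B" for a b
    using pauli_expansion_exists[of "{..<n}" a b U] that by (simp add: c_def cong: sum.cong)
  have "pauli_coeff n U = c"
    unfolding pauli_coeff_def
  proof (rule the_equality)
    fix c'
    assume c': "(\<forall>x. x \<notin> ?P \<longrightarrow> c' x = 0) \<and>
      (\<forall>a\<in>?B. \<forall>b\<in>?B. U a b = (\<Sum>x\<in>?P. c' x * pauli_on {..<n} x a b))"
    show "c' = c"
    proof
      fix z show "c' z = c z"
        using c' pauli_expansion_coeff[of "{..<n}" z U c'] by (auto simp: c_def)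
    qed
  qed (auto simp: c_def expansion)
  then show ?thesis using expansion assms by simp
qed

lemma merge_in_bits_on:
  "S \<subseteq> T \<Longrightarrow> a \<in> bits_on S \<Longrightarrow> a' \<in> bits_on (T - S) \<Longrightarrow> merge S a a' \<in> bits_on T"
  unfolding bits_on_def merge_def by auto

lemma pauli_on_merge:
  assumes "S \<subseteq> T" "finite T"
  shows "pauli_on T x (merge S a a') (merge S b b') = pauli_on S x a b * pauli_on (T - S) x a' b'"
proof -
  have "pauli_on T x (merge S a a') (merge S b b')
      = (\<Prod>i\<in>T - S. pauli1 (x i) (merge S a a' i) (merge S b b' i)) * (\<Prod>i\<in>S. pauli1 (x i) (merge S a a' i) (merge S b b' i))"
    unfolding pauli_on_def using assms by (rule prod.subset_diff)
  also have "\<dots> = pauli_on (T - S) x a' b' * pauli_on S x a b"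
    unfolding pauli_on_def merge_def by (intro arg_cong2[where f = "(*)"] prod.cong) auto
  finally show ?thesis by (simp add: mult.commute)
qed

lemma partial_hs_inner_pauli_expansion:
  assumes T: "finite T" and ST: "S \<subseteq> T" and y: "y \<in> paulis_on S"
  shows "hs_inner S (pauli_on S y)
           (\<lambda>a b. \<Sum>x\<in>paulis_on T. c x * pauli_on T x (merge S a a') (merge S b b'))
       = 2 ^ card S * (\<Sum>x\<in>{x\<in>paulis_on T. \<forall>i\<in>S. x i = y i}. c x * pauli_on (T - S) x a' b')"
proof -
  have S: "finite S" using T ST finite_subset by blast
  have orth: "hs_inner S (pauli_on S y) (pauli_on S x) = (if \<forall>i\<in>S. x i = y i then 2 ^ card S else 0)"
    if "x \<in> paulis_on T" for x
    using that y ST by (intro pauli_on_orthogonal[OF S]) (auto simp: paulis_on_less_4)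
  have "hs_inner S (pauli_on S y)
          (\<lambda>a b. \<Sum>x\<in>paulis_on T. c x * pauli_on T x (merge S a a') (merge S b b'))
      = hs_inner S (pauli_on S y)
          (\<lambda>a b. \<Sum>x\<in>paulis_on T. (c x * pauli_on (T - S) x a' b') * pauli_on S x a b)"
    by (simp add: pauli_on_merge[OF ST T] mult_ac)
  also have "\<dots> = (\<Sum>x\<in>paulis_on T. c x * pauli_on (T - S) x a' b' * hs_inner S (pauli_on S y) (pauli_on S x))"
    by (rule hs_inner_sum_right)
  also have "\<dots> = 2 ^ card S * (\<Sum>x\<in>{x\<in>paulis_on T. \<forall>i\<in>S. x i = y i}. c x * pauli_on (T - S) x a' b')"
    using T by (simp add: orth sum.inter_filter finite_paulis_on sum_distrib_left mult_ac if_distrib cong: if_cong)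
  finally show ?thesis .
qed

lemma bell_prob_choi:
  assumes S: "S \<subseteq> {..<n}" and y: "y \<in> paulis_on S"
  shows "bell_prob n S (choi n U) y
       = (\<Sum>x\<in>{x\<in>paulis_on {..<n}. \<forall>i\<in>S. x i = y i}. (cmod (pauli_coeff n U x))\<^sup>2)"
proof -
  define R where "R = {..<n} - S"
  define X where "X = {x\<in>paulis_on {..<n}. \<forall>i\<in>S. x i = y i}"
  define Z where "Z a' b' = (\<Sum>x\<in>X. pauli_coeff n U x * pauli_on R x a' b')" for a' b'
  (* the factor 2^card S from Pauli orthogonality on S, over the normalisations of both states *)
  define K where "K = 2 ^ card S / (sqrt (2 ^ card S) * sqrt (2 ^ n))"
  have fin: "finite S" "finite R" "finite X"
    using S finite_subset unfolding R_def X_def by (auto simp: finite_paulis_on)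
  have card: "card S + card R = n"
    using S card_Diff_subset[OF fin(1) S] card_mono[OF _ S] unfolding R_def by simp
  have amplitude:
    "(\<Sum>aS\<in>bits_on S. \<Sum>bS\<in>bits_on S.
        cnj (bell_vec S y aS bS) * choi n U (merge S aS a') (merge S bS b')) = of_real K * Z a' b'"
    if "a' \<in> bits_on R" "b' \<in> bits_on R" for a' b'
  proof -
    have "(\<Sum>aS\<in>bits_on S. \<Sum>bS\<in>bits_on S.
            cnj (bell_vec S y aS bS) * choi n U (merge S aS a') (merge S bS b'))
        = hs_inner S (pauli_on S y) (\<lambda>aS bS. U (merge S aS a') (merge S bS b'))
            / of_real (sqrt (2 ^ card S) * sqrt (2 ^ n))"
      by (simp add: hs_inner_def bell_vec_def choi_def sum_divide_distrib)
    also have "hs_inner S (pauli_on S y) (\<lambda>aS bS. U (merge S aS a') (merge S bS b'))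
        = hs_inner S (pauli_on S y) (\<lambda>aS bS. \<Sum>x\<in>paulis_on {..<n}.
            pauli_coeff n U x * pauli_on {..<n} x (merge S aS a') (merge S bS b'))"
      using S that unfolding R_def
      by (intro hs_inner_cong refl pauli_coeff_expansion merge_in_bits_on)
    also have "\<dots> = 2 ^ card S * Z a' b'"
      unfolding Z_def X_def R_def using S y by (intro partial_hs_inner_pauli_expansion) simp_all
    finally show ?thesis by (simp add: K_def)
  qed
  have "bell_prob n S (choi n U) y
      = (\<Sum>a'\<in>bits_on R. \<Sum>b'\<in>bits_on R. (cmod (of_real K * Z a' b'))\<^sup>2)"
    unfolding bell_prob_def R_def[symmetric] by (intro sum.cong refl) (simp add: amplitude)
  also have "\<dots> = K\<^sup>2 * (\<Sum>a'\<in>bits_on R. \<Sum>b'\<in>bits_on R. (cmod (Z a' b'))\<^sup>2)"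
    by (simp add: norm_mult power_mult_distrib sum_distrib_left)
  also have "(\<Sum>a'\<in>bits_on R. \<Sum>b'\<in>bits_on R. (cmod (Z a' b'))\<^sup>2)
      = 2 ^ card R * (\<Sum>x\<in>X. (cmod (pauli_coeff n U x))\<^sup>2)"
    unfolding Z_def
  proof (rule pauli_parseval[OF fin(2,3)])
    show "\<forall>x\<in>X. \<forall>i\<in>R. x i < 4"
      unfolding X_def R_def by (auto simp: paulis_on_less_4)
    show "\<forall>x\<in>X. \<forall>x'\<in>X. (\<forall>i\<in>R. x i = x' i) \<longrightarrow> x = x'"
    proof (intro ballI impI)
      fix x x' assume "x \<in> X" "x' \<in> X" "\<forall>i\<in>R. x i = x' i"
      then show "x = x'"
        unfolding X_def R_def by (intro paulis_on_eqI[of x "{..<n}" x']) auto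
    qed
  qed
  also have "K\<^sup>2 * (2 ^ card R * (\<Sum>x\<in>X. (cmod (pauli_coeff n U x))\<^sup>2))
      = (\<Sum>x\<in>X. (cmod (pauli_coeff n U x))\<^sup>2)"
  proof -
    have "K\<^sup>2 = (2 ^ card S)\<^sup>2 / (2 ^ card S * 2 ^ n)"
      unfolding K_def by (simp add: power_divide power_mult_distrib)
    also have "\<dots> = 2 ^ card S / 2 ^ n"
      by (simp add: power2_eq_square)
    finally have "K\<^sup>2 * 2 ^ card R = 2 ^ (card S + card R) / 2 ^ n"
      by (simp add: power_add)
    then show ?thesis using card by simp
  qed
  finally show ?thesis unfolding X_def .
qed

lemma paulis_on_nonzeroE:
  assumes y: "y \<in> paulis_on S" "y \<noteq> (\<lambda>_. 0)"
  obtains i where "i \<in> S" "y i \<noteq> 0"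
proof -
  obtain i where i: "y i \<noteq> 0" using y by (auto simp: fun_eq_iff)
  moreover have "i \<in> S" using y i unfolding paulis_on_def by auto
  ultimately show thesis using that by blast
qed

lemma sum_paulis_group_by_restriction:
  assumes ST: "S \<subseteq> T" and T: "finite T"
  shows "(\<Sum>y\<in>paulis_on S - {\<lambda>_. 0}. \<Sum>x\<in>{x\<in>paulis_on T. \<forall>i\<in>S. x i = y i}. f x)
       = (\<Sum>x\<in>{x\<in>paulis_on T. \<exists>i\<in>S. x i \<noteq> 0}. f x)"
proof -
  define A where "A = {x\<in>paulis_on T. \<exists>i\<in>S. x i \<noteq> 0}"
  define Y where "Y = paulis_on S - {\<lambda>_. 0}"
  define restr where "restr x = (\<lambda>i. if i \<in> S then x i else 0)" for x :: "nat \<Rightarrow> nat"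
  have restr_eq_iff: "restr x = y \<longleftrightarrow> (\<forall>i\<in>S. x i = y i)" if "y \<in> paulis_on S" for x y
    using that unfolding restr_def paulis_on_def by (auto simp: fun_eq_iff)
  have image: "restr ` A \<subseteq> Y"
  proof
    fix z assume "z \<in> restr ` A"
    then obtain x i where x: "x \<in> paulis_on T" "i \<in> S" "x i \<noteq> 0" and z: "z = restr x"
      unfolding A_def by blast
    have "z \<in> paulis_on S" using x(1) ST unfolding z restr_def paulis_on_def by auto
    moreover have "z i \<noteq> 0" using x unfolding z restr_def by simp
    ultimately show "z \<in> Y" unfolding Y_def by auto
  qed
  have fibre: "{x\<in>A. restr x = y} = {x\<in>paulis_on T. \<forall>i\<in>S. x i = y i}" if y: "y \<in> Y" for y
  proof -
    obtain i where "i \<in> S" "y i \<noteq> 0" using y unfolding Y_def by (auto elim: paulis_on_nonzeroE)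
    then show ?thesis using y restr_eq_iff unfolding A_def Y_def by auto
  qed
  have finite: "finite A" "finite Y"
    using finite_subset[OF ST T] T unfolding A_def Y_def by (auto simp: finite_paulis_on)
  have "(\<Sum>y\<in>Y. \<Sum>x\<in>{x\<in>paulis_on T. \<forall>i\<in>S. x i = y i}. f x) = (\<Sum>y\<in>Y. \<Sum>x\<in>{x\<in>A. restr x = y}. f x)"
    by (intro sum.cong refl) (simp add: fibre)
  also have "\<dots> = (\<Sum>x\<in>A. f x)"
    using finite image by (rule sum.group)
  finally show ?thesis unfolding A_def Y_def .
qed

theorem mainTheorem7:
  fixes n :: nat and S :: "nat set" and U :: qmat
  assumes "unitary n U"
    and "S \<subseteq> {..<n}"
  shows "expected_X n S U = influence n S U"
proof -
  have "expected_X n S U = (\<Sum>y\<in>paulis_on S - {\<lambda>_. 0}.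
      \<Sum>x\<in>{x\<in>paulis_on {..<n}. \<forall>i\<in>S. x i = y i}. (cmod (pauli_coeff n U x))\<^sup>2)"
    unfolding expected_X_def using assms(2) by (intro sum.cong refl bell_prob_choi) auto
  also have "\<dots> = influence n S U"
    unfolding influence_def using assms(2) by (intro sum_paulis_group_by_restriction) auto
  finally show ?thesis .
qed

end
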